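(* Let $\mathrm r=(r_1,\dots,r_d)\in\mathbb{Z}_+^d$ with $\mathrm r>0$, let $x\in\bar S_d^{\mathrm r}$ with smallest solution $\mathrm k=(k_1,\dots,k_d)\in\mathbb{N}^d$ of $(\mathrm r,x)$, and assume that $(\mathrm r,x)$ is a simple system. Then the number of good cyclical permutations of $x$ (i.e. the number of $\mathrm q\in\mathbb{Z}_+^d$, $\mathrm q\le\mathrm k-1_d$, such that $\mathrm k$ is the smallest solution of $(\mathrm r,x_{\mathrm q,\mathrm k})$) is $$\sum_{(j_1,\dots,j_d)\in D}\ \prod_{i=1}^d k_{j_i i},$$ where $k_{ij}=x^{i,j}(k_i)$ for $i,j\in[d]$ and $k_{0i}=r_i$.
   Context: $d\ge2$, $[d]=\{1,\dots,d\}$, $\mathbb N=\{1,2,\dots\}$, $1_d=(1,\dots,1)$. $S_d$: families $x=(x^{(1)},\dots,x^{(d)})$, $x^{(i)}=(x^{i,1},\dots,x^{i,d})$ a $\mathbb{Z}^d$-valued sequence indexed by $\{0,\dots,n_i\}$, $x^{(i)}_0=0$, $x^{i,j}$ nondecreasing for $i\ne j$, $x^{i,i}_{n+1}-x^{i,i}_n\ge-1$; $(n_1,\dots,n_d)$ is its length; $x^{i,j}(n)=x^{i,j}_n$. A solution of $(\mathrm r,x)$ is $\mathrm s\in\mathbb{Z}_+^d$, $\mathrm s\le$ length, with $r_j+\sum_ix^{i,j}(s_i)=0$ for all $j$; the smallest solution is one that is coordinatewise $\le$ all solutions. $\bar S_d^{\mathrm r}$ is the set of $x\in S_d$ whose length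 lies in $\mathbb{N}^d$ and is the smallest solution of $(\mathrm r,x)$, and with $x^{i,i}_k=-k$ for all $k,i$. For $x\in\bar S_d^{\mathrm r}$ with smallest solution $\mathrm k$, $(\mathrm r,x)$ is a simple system if for every $i\in[d]$ there is $k'_i\le k_i-1$ such that $x^{i,j}(k)=0$ for all $0\le k\le k'_i$ and $j\ne i$, and $x^{i,j}(k)=x^{i,j}(k_i)$ for all $k'_i+1\le k\le k_i$ and $j\ne i$ (i.e. for each $i$ the sequences $x^{i,j}$, $j\ne i$, have at most one positive jump, occurring at a common time). Cyclical permutations: for $g$ on $\{0,\dots,m\}$ with $g(0)=0$, $1\le n\le m$, $0\le q\le n-1$: $g_{q,n}(h)=g(q+h)-g(q)$ for $0\le h\le n-q$, $g_{q,n}(h)=g(h-(n-q))+g(n)-g(q)$ for $n-q\le h\le n$, $g_{q,n}(h)=g(h)$ for $h\ge n$; $x_{\mathrm q,\mathrm k}=(x^{(1)}_{q_1,k_1},\dots,x^{(d)}_{q_d,k_d})$. $D$ is the set of vectors $(j_1,\dots,j_d)\in\{0,1,\dots,d\}^d$ coding an elementary forest, i.e. a forest with exactly one vertex of each type $i\in[d]$, where $j_i$ is the type of the parent of the vertex of type $i$ and $j_i=0$ if that vertex is a root; equivalently $j_i\ne i$ and for every $i$ the iterates $i,j_i,j_{j_i},\dots$ eventually reach $0$. *)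

theory Defs
  imports Main "HOL-Library.FuncSet"
begin

text \<open>Conventions: d is the dimension, types are indexed by 1..d.
  A family x is given as x i j m = x^{i,j}_m (for i,j in 1..d, 0 <= m <= n i),
  its length is n :: nat => nat (values on 1..d). Vectors in Z_+^d are
  functions nat => nat (only values on 1..d matter).\<close>

definition in_S :: "nat \<Rightarrow> (nat \<Rightarrow> nat \<Rightarrow> nat \<Rightarrow> int) \<Rightarrow> (nat \<Rightarrow> nat) \<Rightarrow> bool" where
  "in_S d x n \<longleftrightarrow>
     (\<forall>i\<in>{1..d}. \<forall>j\<in>{1..d}. x i j 0 = 0) \<and>
     (\<forall>i\<in>{1..d}. \<forall>j\<in>{1..d}. i \<noteq> j \<longrightarrow>
        (\<forall>m. m < n i \<longrightarrow> x i j m \<le> x i j (Suc m))) \<and>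
     (\<forall>i\<in>{1..d}. \<forall>m. m < n i \<longrightarrow> x i i (Suc m) - x i i m \<ge> -1)"

definition is_solution ::
  "nat \<Rightarrow> (nat \<Rightarrow> int) \<Rightarrow> (nat \<Rightarrow> nat \<Rightarrow> nat \<Rightarrow> int) \<Rightarrow> (nat \<Rightarrow> nat) \<Rightarrow> (nat \<Rightarrow> nat) \<Rightarrow> bool" where
  "is_solution d r x n s \<longleftrightarrow>
     (\<forall>i\<in>{1..d}. s i \<le> n i) \<and>
     (\<forall>j\<in>{1..d}. r j + (\<Sum>i\<in>{1..d}. x i j (s i)) = 0)"

definition smallest_solution ::
  "nat \<Rightarrow> (nat \<Rightarrow> int) \<Rightarrow> (nat \<Rightarrow> nat \<Rightarrow> nat \<Rightarrow> int) \<Rightarrow> (nat \<Rightarrow> nat) \<Rightarrow> (nat \<Rightarrow> nat) \<Rightarrow> bool" where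
  "smallest_solution d r x n s \<longleftrightarrow>
     is_solution d r x n s \<and>
     (\<forall>s'. is_solution d r x n s' \<longrightarrow> (\<forall>i\<in>{1..d}. s i \<le> s' i))"

definition in_S_bar ::
  "nat \<Rightarrow> (nat \<Rightarrow> int) \<Rightarrow> (nat \<Rightarrow> nat \<Rightarrow> nat \<Rightarrow> int) \<Rightarrow> (nat \<Rightarrow> nat) \<Rightarrow> bool" where
  "in_S_bar d r x n \<longleftrightarrow>
     in_S d x n \<and> (\<forall>i\<in>{1..d}. n i \<ge> 1) \<and> smallest_solution d r x n n \<and>
     (\<forall>i\<in>{1..d}. \<forall>m \<le> n i. x i i m = - int m)"

definition simple_system ::
  "nat \<Rightarrow> (nat \<Rightarrow> nat \<Rightarrow> nat \<Rightarrow> int) \<Rightarrow> (nat \<Rightarrow> nat) \<Rightarrow> bool" where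
  "simple_system d x k \<longleftrightarrow>
     (\<forall>i\<in>{1..d}. \<exists>k'. k' \<le> k i - 1 \<and>
        (\<forall>m \<le> k'. \<forall>j\<in>{1..d}. j \<noteq> i \<longrightarrow> x i j m = 0) \<and>
        (\<forall>m. k' + 1 \<le> m \<and> m \<le> k i \<longrightarrow> (\<forall>j\<in>{1..d}. j \<noteq> i \<longrightarrow> x i j m = x i j (k i))))"

definition cyc :: "(nat \<Rightarrow> int) \<Rightarrow> nat \<Rightarrow> nat \<Rightarrow> nat \<Rightarrow> int" where
  "cyc g q n h =
     (if h \<le> n - q then g (q + h) - g q
      else if h \<le> n then g (h - (n - q)) + g n - g q
      else g h)"

definition cyc_fam ::
  "(nat \<Rightarrow> nat \<Rightarrow> nat \<Rightarrow> int) \<Rightarrow> (nat \<Rightarrow> nat) \<Rightarrow> (nat \<Rightarrow> nat) \<Rightarrow> (nat \<Rightarrow> nat \<Rightarrow> nat \<Rightarrow> int)" where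
  "cyc_fam x q k = (\<lambda>i j h. cyc (x i j) (q i) (k i) h)"

text \<open>Codings of elementary forests: j i is the parent type of i (0 = root).\<close>
definition elem_forests :: "nat \<Rightarrow> (nat \<Rightarrow> nat) set" where
  "elem_forests d = {jv \<in> {1..d} \<rightarrow>\<^sub>E {0..d}.
     \<forall>i\<in>{1..d}. jv i \<noteq> i \<and>
       (\<exists>t. ((\<lambda>m. if m = 0 then 0 else jv m) ^^ t) i = 0)}"

end

theory Submission
  imports Defs
begin

text \<open>
  In a simple system the off-diagonal entries of row \<open>i\<close> form a single step of height
  \<open>k i j\<close>; the cyclic shift by \<open>q i\<close> moves this step to a time \<open>t i \<in> {1..k i}\<close>, and
  \<open>q \<mapsto> t\<close> is a bijection. For the shifted system, \<open>s\<close> is a solution iff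
  \<open>s j = r j + (\<Sum>i\<in>A - {j}. k i j)\<close> for all \<open>j\<close>, where \<open>A\<close> is the set of types whose step
  has occurred by time \<open>s i\<close>. Hence \<open>k\<close> is the smallest solution iff no proper subset of the
  types is self-consistent in this sense, and the count becomes a purely combinatorial one.

  This count and the weighted sum over elementary forests satisfy the same recursion: split
  according to the set \<open>B\<close> of types with \<open>t j \<le> r j\<close>, resp. the set \<open>B\<close> of roots. Each type
  in \<open>B\<close> contributes a factor \<open>r j\<close>, and what remains is the same problem on the other types
  with \<open>r j\<close> replaced by \<open>\<Sum>i\<in>B. k i j\<close> (thresholds lowered by \<open>r j\<close>, resp. children of
  the roots turned into roots).
\<close>

section \<open>Good threshold vectors\<close>

text \<open>
  Here \<open>W i j\<close> plays the role of \<open>k i j\<close> and \<open>R j\<close> that of \<open>r j\<close>. A threshold vector \<open>t\<close> gives the time at which each type jumps;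
  \<open>A\<close> is consistent if it is exactly the set of types that have jumped when every type \<open>j\<close>
  has run for \<open>level W R A j\<close> steps.
\<close>

definition level :: "(nat \<Rightarrow> nat \<Rightarrow> nat) \<Rightarrow> (nat \<Rightarrow> nat) \<Rightarrow> nat set \<Rightarrow> nat \<Rightarrow> nat" where
  "level W R A j = R j + (\<Sum>i\<in>A - {j}. W i j)"

definition inflow :: "(nat \<Rightarrow> nat \<Rightarrow> nat) \<Rightarrow> nat set \<Rightarrow> nat \<Rightarrow> nat" where
  "inflow W B j = (\<Sum>i\<in>B. W i j)"

definition consistent_set ::
  "(nat \<Rightarrow> nat \<Rightarrow> nat) \<Rightarrow> (nat \<Rightarrow> nat) \<Rightarrow> nat set \<Rightarrow> (nat \<Rightarrow> nat) \<Rightarrow> nat set \<Rightarrow> bool" where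
  "consistent_set W R S t A \<longleftrightarrow> (\<forall>j\<in>S. j \<in> A \<longleftrightarrow> t j \<le> level W R A j)"

definition good_threshold ::
  "(nat \<Rightarrow> nat \<Rightarrow> nat) \<Rightarrow> (nat \<Rightarrow> nat) \<Rightarrow> nat set \<Rightarrow> (nat \<Rightarrow> nat) \<Rightarrow> bool" where
  "good_threshold W R S t \<longleftrightarrow> (\<forall>A. A \<subset> S \<longrightarrow> \<not> consistent_set W R S t A)"

definition good_thresholds ::
  "(nat \<Rightarrow> nat \<Rightarrow> nat) \<Rightarrow> (nat \<Rightarrow> nat) \<Rightarrow> nat set \<Rightarrow> (nat \<Rightarrow> nat) set" where
  "good_thresholds W R S = {t \<in> (\<Pi>\<^sub>E j\<in>S. {1..level W R S j}). good_threshold W R S t}"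

lemma level_mono: "finite S \<Longrightarrow> A \<subseteq> S \<Longrightarrow> level W R A j \<le> level W R S j"
  unfolding level_def by (auto intro: sum_mono2)

lemma level_Un_inflow:
  assumes "finite S" "B \<subseteq> S" "A \<subseteq> S - B" "j \<in> S - B"
  shows "level W R (A \<union> B) j = R j + level W (inflow W B) A j"
proof -
  have "(A \<union> B) - {j} = (A - {j}) \<union> B" using assms by auto
  moreover have "(\<Sum>i\<in>(A - {j}) \<union> B. W i j) = (\<Sum>i\<in>A - {j}. W i j) + (\<Sum>i\<in>B. W i j)"
    using assms by (intro sum.union_disjoint) (auto intro: finite_subset[of _ S])
  ultimately show ?thesis unfolding level_def inflow_def by simp
qed

lemma level_full_Un_inflow:
  "finite S \<Longrightarrow> B \<subseteq> S \<Longrightarrow> j \<in> S - B \<Longrightarrow> level W R S j = R j + level W (inflow W B) (S - B) j"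
  using level_Un_inflow[of S B "S - B" j W R] by (simp add: Un_absorb2)

lemma consistent_set_contains_low:
  "consistent_set W R S t A \<Longrightarrow> {j\<in>S. t j \<le> R j} \<subseteq> A"
  unfolding consistent_set_def level_def by fastforce

lemma consistent_set_shift:
  assumes fin: "finite S" and B: "B = {j\<in>S. t j \<le> R j}" and A: "A \<subseteq> S - B"
  shows "consistent_set W R S t (A \<union> B)
     \<longleftrightarrow> consistent_set W (inflow W B) (S - B) (\<lambda>j. t j - R j) A"
proof -
  have "(j \<in> A \<union> B \<longleftrightarrow> t j \<le> level W R (A \<union> B) j)" if "j \<in> B" for j
    using that B unfolding level_def by auto
  moreover have "(j \<in> A \<union> B \<longleftrightarrow> t j \<le> level W R (A \<union> B) j) \<longleftrightarrow>
      (j \<in> A \<longleftrightarrow> t j - R j \<le> level W (inflow W B) A j)" if "j \<in> S - B" for j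
    using that B level_Un_inflow[OF fin _ A that, where W=W and R=R] by auto
  ultimately show ?thesis
    unfolding consistent_set_def by (metis Diff_iff)
qed

lemma good_threshold_shift:
  assumes fin: "finite S" and B: "B = {j\<in>S. t j \<le> R j}"
  shows "good_threshold W R S t \<longleftrightarrow> good_threshold W (inflow W B) (S - B) (\<lambda>j. t j - R j)"
proof
  assume good: "good_threshold W R S t"
  show "good_threshold W (inflow W B) (S - B) (\<lambda>j. t j - R j)"
    unfolding good_threshold_def
  proof (intro allI impI notI)
    fix A assume "A \<subset> S - B" "consistent_set W (inflow W B) (S - B) (\<lambda>j. t j - R j) A"
    moreover have "A \<union> B \<subset> S" using \<open>A \<subset> S - B\<close> B by auto
    ultimately show False
      using good consistent_set_shift[OF fin B, where A=A and W=W] unfolding good_threshold_def by auto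
  qed
next
  assume good: "good_threshold W (inflow W B) (S - B) (\<lambda>j. t j - R j)"
  show "good_threshold W R S t"
    unfolding good_threshold_def
  proof (intro allI impI notI)
    fix A assume A: "A \<subset> S" "consistent_set W R S t A"
    then have "B \<subseteq> A" using consistent_set_contains_low B by blast
    then have "A = (A - B) \<union> B" and "A - B \<subset> S - B" using A by auto
    then show False
      using good A consistent_set_shift[OF fin B, where A="A - B" and W=W] unfolding good_threshold_def by auto
  qed
qed

lemma good_threshold_cong:
  "(\<And>j. j \<in> S \<Longrightarrow> t j = t' j) \<Longrightarrow> good_threshold W R S t \<longleftrightarrow> good_threshold W R S t'"
  unfolding good_threshold_def consistent_set_def by simp

definition merge_shifted ::
  "nat set \<Rightarrow> nat set \<Rightarrow> (nat \<Rightarrow> nat) \<Rightarrow> (nat \<Rightarrow> nat) \<times> (nat \<Rightarrow> nat) \<Rightarrow> nat \<Rightarrow> nat" where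
  "merge_shifted B S R = (\<lambda>(u, v) j. if j \<in> B then u j else if j \<in> S then v j + R j else undefined)"

lemma merge_shifted_in_good_thresholds:
  assumes fin: "finite S" and BS: "B \<subseteq> S"
    and u: "u \<in> (\<Pi>\<^sub>E j\<in>B. {1..R j})" and v: "v \<in> good_thresholds W (inflow W B) (S - B)"
  shows "merge_shifted B S R (u, v) \<in> good_thresholds W R S"
    and "{j\<in>S. merge_shifted B S R (u, v) j \<le> R j} = B"
proof -
  let ?t = "merge_shifted B S R (u, v)"
  have v_range: "v \<in> (\<Pi>\<^sub>E j\<in>S - B. {1..level W (inflow W B) (S - B) j})"
    and v_good: "good_threshold W (inflow W B) (S - B) v"
    using v unfolding good_thresholds_def by auto
  show B: "{j\<in>S. ?t j \<le> R j} = B"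
    using u v_range BS by (force simp: merge_shifted_def PiE_iff)
  have "?t j \<in> {1..level W R S j}" if "j \<in> S" for j
  proof (cases "j \<in> B")
    case True
    then show ?thesis using u by (auto simp: merge_shifted_def PiE_iff level_def)
  next
    case False
    with that have j: "j \<in> S - B" by blast
    show ?thesis
      using PiE_mem[OF v_range j] level_full_Un_inflow[OF fin BS j, of W R] j
      by (auto simp: merge_shifted_def)
  qed
  then have "?t \<in> (\<Pi>\<^sub>E j\<in>S. {1..level W R S j})"
    using BS by (auto simp: PiE_iff extensional_def merge_shifted_def)
  moreover have "good_threshold W R S ?t"
    using good_threshold_shift[OF fin B[symmetric], where W=W] v_good
      good_threshold_cong[of "S - B" v "\<lambda>j. ?t j - R j"] by (simp add: merge_shifted_def)
  ultimately show "?t \<in> good_thresholds W R S"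
    unfolding good_thresholds_def by auto
qed

lemma good_thresholds_low_set_eq_image:
  assumes fin: "finite S" and BS: "B \<subseteq> S"
  shows "{t \<in> good_thresholds W R S. {j\<in>S. t j \<le> R j} = B}
    = merge_shifted B S R ` ((\<Pi>\<^sub>E j\<in>B. {1..R j}) \<times> good_thresholds W (inflow W B) (S - B))"
    (is "?F = _ ` (?U \<times> ?V)")
proof
  show "?F \<subseteq> merge_shifted B S R ` (?U \<times> ?V)"
  proof
    fix t assume "t \<in> ?F"
    then have t: "t \<in> (\<Pi>\<^sub>E j\<in>S. {1..level W R S j})" "good_threshold W R S t"
      and B: "B = {j\<in>S. t j \<le> R j}"
      unfolding good_thresholds_def by auto
    let ?v = "restrict (\<lambda>j. t j - R j) (S - B)"
    have "t = merge_shifted B S R (restrict t B, ?v)"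
    proof
      fix j show "t j = merge_shifted B S R (restrict t B, ?v) j"
        using B BS PiE_arb[OF t(1), of j] by (auto simp: merge_shifted_def)
    qed
    moreover have "restrict t B \<in> ?U"
      using t(1) B by (auto simp: PiE_iff)
    moreover have "?v \<in> (\<Pi>\<^sub>E j\<in>S - B. {1..level W (inflow W B) (S - B) j})"
      using t(1) B level_full_Un_inflow[OF fin BS, where W=W and R=R] by (auto simp: PiE_iff)
    moreover have "good_threshold W (inflow W B) (S - B) ?v"
      using t(2) good_threshold_shift[OF fin B, where W=W]
        good_threshold_cong[of "S - B" ?v "\<lambda>j. t j - R j"] by simp
    ultimately show "t \<in> merge_shifted B S R ` (?U \<times> ?V)"
      unfolding good_thresholds_def by blast
  qed
  show "merge_shifted B S R ` (?U \<times> ?V) \<subseteq> ?F"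
  proof
    fix t assume "t \<in> merge_shifted B S R ` (?U \<times> ?V)"
    then obtain u v where "t = merge_shifted B S R (u, v)" "u \<in> ?U" "v \<in> ?V" by blast
    then show "t \<in> ?F" using merge_shifted_in_good_thresholds[OF fin BS] by simp
  qed
qed

lemma finite_good_thresholds: "finite S \<Longrightarrow> finite (good_thresholds W R S)"
  unfolding good_thresholds_def
  by (rule finite_subset[of _ "\<Pi>\<^sub>E j\<in>S. {1..level W R S j}"]) (auto intro: finite_PiE)

lemma card_good_thresholds_low_set:
  assumes fin: "finite S" and BS: "B \<subseteq> S"
  shows "card {t \<in> good_thresholds W R S. {j\<in>S. t j \<le> R j} = B}
    = (\<Prod>j\<in>B. R j) * card (good_thresholds W (inflow W B) (S - B))"
proof -
  let ?U = "\<Pi>\<^sub>E j\<in>B. {1..R j}" and ?V = "good_thresholds W (inflow W B) (S - B)"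
  have "inj_on (merge_shifted B S R) (?U \<times> ?V)"
  proof (rule inj_on_inverseI)
    fix p assume "p \<in> ?U \<times> ?V"
    then obtain u v where p: "p = (u, v)" and u: "u \<in> ?U" and v: "v \<in> extensional (S - B)"
      unfolding good_thresholds_def by (auto simp: PiE_iff)
    have "restrict (merge_shifted B S R p) B = u"
      using PiE_arb[OF u] by (auto simp: p merge_shifted_def fun_eq_iff)
    moreover have "restrict (\<lambda>j. merge_shifted B S R p j - R j) (S - B) = v"
      using v by (auto simp: p merge_shifted_def fun_eq_iff extensional_def)
    ultimately show
      "(restrict (merge_shifted B S R p) B, restrict (\<lambda>j. merge_shifted B S R p j - R j) (S - B)) = p"
      by (simp add: p)
  qed
  then have "card {t \<in> good_thresholds W R S. {j\<in>S. t j \<le> R j} = B} = card (?U \<times> ?V)"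
    unfolding good_thresholds_low_set_eq_image[OF fin BS] by (rule card_image)
  also have "\<dots> = (\<Prod>j\<in>B. R j) * card ?V"
    using finite_subset[OF BS fin] by (simp add: card_cartesian_product card_PiE)
  finally show ?thesis .
qed

lemma good_threshold_low_set_nonempty:
  assumes "t \<in> good_thresholds W R S" "S \<noteq> {}"
  shows "{j\<in>S. t j \<le> R j} \<noteq> {}"
proof
  assume "{j\<in>S. t j \<le> R j} = {}"
  then have "consistent_set W R S t {}"
    unfolding consistent_set_def level_def by auto
  then show False
    using assms unfolding good_thresholds_def good_threshold_def by blast
qed

lemma card_good_thresholds_rec:
  assumes fin: "finite S" and ne: "S \<noteq> {}"
  shows "card (good_thresholds W R S)
    = (\<Sum>B\<in>Pow S - {{}}. (\<Prod>j\<in>B. R j) * card (good_thresholds W (inflow W B) (S - B)))"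
proof -
  let ?low = "\<lambda>t. {j\<in>S. t j \<le> R j}"
  have "card (good_thresholds W R S) = (\<Sum>B\<in>Pow S. \<Sum>t\<in>{t \<in> good_thresholds W R S. ?low t = B}. 1)"
    by (simp only: card_eq_sum, rule sum.group[symmetric]) (use fin finite_good_thresholds in auto)
  also have "\<dots> = (\<Sum>B\<in>Pow S. card {t \<in> good_thresholds W R S. ?low t = B})"
    by simp
  also have "\<dots> = (\<Sum>B\<in>Pow S - {{}}. card {t \<in> good_thresholds W R S. ?low t = B})"
  proof -
    have "{t \<in> good_thresholds W R S. ?low t = {}} = {}"
      using good_threshold_low_set_nonempty[OF _ ne] by blast
    then have "card {t \<in> good_thresholds W R S. ?low t = {}} = 0"
      by (metis card.empty)
    then show ?thesis
      using fin sum.remove[of "Pow S" "{}" "\<lambda>B. card {t \<in> good_thresholds W R S. ?low t = B}"]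
      by simp
  qed
  also have "\<dots> = (\<Sum>B\<in>Pow S - {{}}. (\<Prod>j\<in>B. R j) * card (good_thresholds W (inflow W B) (S - B)))"
    using card_good_thresholds_low_set[OF fin] by (intro sum.cong) auto
  finally show ?thesis .
qed

section \<open>Weighted forests\<close>

text \<open>
  A forest on \<open>S\<close> is coded by its parent map \<open>p\<close>, with \<open>p j = 0\<close> for roots, so \<open>0 \<notin> S\<close>
  is required throughout.
\<close>

inductive reaches_root :: "(nat \<Rightarrow> nat) \<Rightarrow> nat \<Rightarrow> bool" for p where
  root: "reaches_root p 0"
| parent: "reaches_root p (p i) \<Longrightarrow> reaches_root p i"

definition forests :: "nat set \<Rightarrow> (nat \<Rightarrow> nat) set" where
  "forests S = {p \<in> S \<rightarrow>\<^sub>E insert 0 S. \<forall>i\<in>S. p i \<noteq> i \<and> reaches_root p i}"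

definition forest_weight :: "(nat \<Rightarrow> nat \<Rightarrow> nat) \<Rightarrow> (nat \<Rightarrow> nat) \<Rightarrow> (nat \<Rightarrow> nat) \<Rightarrow> nat \<Rightarrow> nat" where
  "forest_weight W R p j = (if p j = 0 then R j else W (p j) j)"

definition forest_sum :: "(nat \<Rightarrow> nat \<Rightarrow> nat) \<Rightarrow> (nat \<Rightarrow> nat) \<Rightarrow> nat set \<Rightarrow> nat" where
  "forest_sum W R S = (\<Sum>p\<in>forests S. \<Prod>j\<in>S. forest_weight W R p j)"

lemma forestsD:
  assumes "p \<in> forests S" "i \<in> S"
  shows "p i \<in> insert 0 S" and "p i \<noteq> i" and "reaches_root p i"
  using assms PiE_mem[of p S "\<lambda>_. insert 0 S" i] unfolding forests_def by auto

lemma reaches_root_parent_root: "p i = 0 \<Longrightarrow> reaches_root p i"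
  by (rule reaches_root.parent) (simp add: reaches_root.root)

lemma reaches_root_funpow_iff:
  "reaches_root p i \<longleftrightarrow> (\<exists>t. ((\<lambda>m. if m = 0 then 0 else p m) ^^ t) i = 0)"
  (is "_ \<longleftrightarrow> (\<exists>t. (?f ^^ t) i = 0)")
proof
  assume "reaches_root p i"
  then show "\<exists>t. (?f ^^ t) i = 0"
  proof (induction rule: reaches_root.induct)
    case root
    show ?case by (metis funpow_0)
  next
    case (parent i)
    then obtain t where "(?f ^^ t) (p i) = 0" by blast
    then have "(?f ^^ Suc t) i = 0" if "i \<noteq> 0"
      using that by (simp add: funpow_Suc_right del: funpow.simps)
    then show ?case by (metis funpow_0)
  qed
next
  assume "\<exists>t. (?f ^^ t) i = 0"
  then obtain t where "(?f ^^ t) i = 0" by blast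
  then show "reaches_root p i"
  proof (induction t arbitrary: i)
    case 0
    then show ?case by (simp add: reaches_root.root)
  next
    case (Suc t)
    then have "reaches_root p (?f i)"
      by (simp add: funpow_Suc_right del: funpow.simps)
    then show ?case by (cases "i = 0") (auto intro: reaches_root.intros)
  qed
qed

lemma reaches_root_cong:
  assumes "reaches_root p i" "i \<in> insert 0 S"
    and "p \<in> S \<rightarrow> insert 0 S" "\<And>j. j \<in> S \<Longrightarrow> p' j = p j"
  shows "reaches_root p' i"
  using assms(1,2)
proof (induction rule: reaches_root.induct)
  case root
  show ?case by (rule reaches_root.root)
next
  case (parent i)
  show ?case
  proof (cases "i = 0")
    case False
    with parent.prems have "i \<in> S" by simp
    then have "reaches_root p' (p' i)"
      using parent.IH assms(3,4) by auto
    then show ?thesis by (rule reaches_root.parent)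
  qed (simp add: reaches_root.root)
qed

lemma reaches_root_contract:
  assumes "\<And>b. b \<in> B \<Longrightarrow> p b = 0"
  shows "reaches_root (\<lambda>j. if p j \<in> B then 0 else p j) i \<longleftrightarrow> reaches_root p i"
  (is "reaches_root ?p' i \<longleftrightarrow> _")
proof
  show "reaches_root ?p' i \<Longrightarrow> reaches_root p i"
  proof (induction rule: reaches_root.induct)
    case (parent i)
    show ?case
    proof (cases "p i \<in> B")
      case True
      then have "reaches_root p (p i)"
        using assms[OF True] by (metis reaches_root.intros)
      then show ?thesis by (rule reaches_root.parent)
    next
      case False
      then show ?thesis using parent.IH by (auto intro: reaches_root.parent)
    qed
  qed (rule reaches_root.root)
  show "reaches_root p i \<Longrightarrow> reaches_root ?p' i"
  proof (induction rule: reaches_root.induct)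
    case (parent i)
    then have "reaches_root ?p' (?p' i)"
      by (auto intro: reaches_root.root)
    then show ?case by (rule reaches_root.parent)
  qed (rule reaches_root.root)
qed

lemma forest_has_root:
  assumes "p \<in> forests S" "0 \<notin> S" "i \<in> S"
  shows "\<exists>j\<in>S. p j = 0"
proof (rule ccontr)
  assume no_root: "\<not> (\<exists>j\<in>S. p j = 0)"
  have "reaches_root p i" using forestsD(3)[OF assms(1,3)] .
  then have "i \<notin> S"
  proof (induction rule: reaches_root.induct)
    case (parent i)
    show ?case
    proof
      assume "i \<in> S"
      then have "p i \<in> insert 0 S" using forestsD(1)[OF assms(1)] by blast
      then show False using parent.IH no_root \<open>i \<in> S\<close> by auto
    qed
  qed (use assms(2) in simp)
  with assms(3) show False by simp
qed

lemma finite_forests: "finite S \<Longrightarrow> finite (forests S)"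
  unfolding forests_def
  by (rule finite_subset[of _ "S \<rightarrow>\<^sub>E insert 0 S"]) (auto intro: finite_PiE)

lemma forest_sum_empty: "forest_sum W R {} = 1"
proof -
  have "forests {} = {\<lambda>_. undefined}" unfolding forests_def by auto
  then show ?thesis unfolding forest_sum_def by simp
qed

text \<open>
  Deleting the roots \<open>B\<close> of a forest on \<open>S\<close> turns their children into roots of a forest on
  \<open>S - B\<close>. Conversely, each root \<open>j\<close> of a forest \<open>q\<close> on \<open>S - B\<close> may be attached to any vertex
  of \<open>B\<close>, and every other vertex keeps its parent; \<open>parent_choices B q j\<close> records this.
\<close>

definition contract_roots :: "nat set \<Rightarrow> nat set \<Rightarrow> (nat \<Rightarrow> nat) \<Rightarrow> nat \<Rightarrow> nat" where
  "contract_roots B S p = (\<lambda>j\<in>S - B. if p j \<in> B then 0 else p j)"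

lemma contract_roots_in_forests:
  assumes S: "0 \<notin> S" and p: "p \<in> forests S" and B: "B = {j\<in>S. p j = 0}"
  shows "contract_roots B S p \<in> forests (S - B)"
proof -
  let ?g = "\<lambda>j. if p j \<in> B then 0 else p j"
  note p_range = forestsD(1)[OF p] and p_loop = forestsD(2)[OF p] and p_reach = forestsD(3)[OF p]
  have g_range: "?g j \<in> insert 0 (S - B)" if "j \<in> S - B" for j
    using p_range[of j] that B by auto
  have roots: "\<And>b. b \<in> B \<Longrightarrow> p b = 0" using B by blast
  have g_reach: "reaches_root ?g i" if "i \<in> S - B" for i
    using reaches_root_contract[of B p i, OF roots] p_reach[of i] that by simp
  have "reaches_root (contract_roots B S p) i" if "i \<in> S - B" for i
  proof (rule reaches_root_cong[where S="S - B" and p="?g"])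
    show "reaches_root ?g i" "i \<in> insert 0 (S - B)" using g_reach[OF that] that by auto
    show "?g \<in> S - B \<rightarrow> insert 0 (S - B)" using g_range by blast
  qed (simp add: contract_roots_def)
  moreover have "contract_roots B S p i \<noteq> i" if "i \<in> S - B" for i
    using that p_loop[of i] S by (cases "i = 0") (auto simp: contract_roots_def)
  moreover have "contract_roots B S p \<in> (S - B) \<rightarrow>\<^sub>E insert 0 (S - B)"
    using g_range unfolding contract_roots_def by (simp add: restrict_PiE_iff)
  ultimately show ?thesis
    unfolding forests_def by blast
qed

definition parent_choices :: "nat set \<Rightarrow> (nat \<Rightarrow> nat) \<Rightarrow> nat \<Rightarrow> nat set" where
  "parent_choices B q j = (if q j = 0 then B else {q j})"

lemma parent_choices_cases:
  assumes "0 \<notin> B" "B \<subseteq> S" "q j \<in> insert 0 (S - B)" "a \<in> parent_choices B q j"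
  shows "a \<in> S" and "a \<noteq> 0" and "(if a \<in> B then 0 else a) = q j"
  using assms unfolding parent_choices_def by (auto split: if_splits intro!: gr0I)

lemma attach_to_roots_in_fiber:
  assumes S: "0 \<notin> S" and BS: "B \<subseteq> S" and q: "q \<in> forests (S - B)"
    and c: "c \<in> (\<Pi>\<^sub>E j\<in>S - B. parent_choices B q j)"
  defines "p \<equiv> \<lambda>j. if j \<in> B then 0 else c j"
  shows "p \<in> forests S" and "{j\<in>S. p j = 0} = B" and "contract_roots B S p = q"
proof -
  note q_range = forestsD(1)[OF q] and q_loop = forestsD(2)[OF q] and q_reach = forestsD(3)[OF q]
  have B0: "0 \<notin> B" using S BS by blast
  note c_cases = parent_choices_cases[OF B0 BS q_range PiE_mem[OF c]]
  have p_root: "p b = 0" if "b \<in> B" for b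
    using that unfolding p_def by simp
  have contract: "(if p j \<in> B then 0 else p j) = q j" if "j \<in> S - B" for j
  proof -
    have "p j = c j" using that unfolding p_def by simp
    then show ?thesis using c_cases(3)[OF that that] by (simp only:)
  qed
  have p_nonroot: "p j \<noteq> 0" if "j \<in> S - B" for j
    using c_cases(2)[OF that that] that unfolding p_def by simp
  show "{j\<in>S. p j = 0} = B"
    using p_nonroot p_root BS by blast
  show "contract_roots B S p = q"
  proof
    fix j show "contract_roots B S p j = q j"
      using contract[of j] PiE_arb[of q "S - B" _ j] q
      by (cases "j \<in> S - B") (auto simp: contract_roots_def forests_def)
  qed
  have "p \<in> S \<rightarrow>\<^sub>E insert 0 S"
    using c_cases(1) PiE_arb[OF c] BS unfolding p_def by (auto simp: PiE_iff extensional_def)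
  moreover have "p i \<noteq> i" if "i \<in> S" for i
    using S that q_loop[of i] contract[of i] unfolding p_def by (cases "i \<in> B") (auto intro!: gr0I)
  moreover have "reaches_root p i" if "i \<in> S" for i
  proof (cases "i \<in> B")
    case True
    then show ?thesis using p_root by (intro reaches_root_parent_root) simp
  next
    case False
    with that have i: "i \<in> S - B" by blast
    have "reaches_root (\<lambda>j. if p j \<in> B then 0 else p j) i"
    proof (rule reaches_root_cong[where S="S - B" and p=q])
      show "q \<in> S - B \<rightarrow> insert 0 (S - B)" using q_range by blast
    qed (use q_reach[OF i] i contract in auto)
    then show ?thesis
      using reaches_root_contract[of B p i, OF p_root] by simp
  qed
  ultimately show "p \<in> forests S" unfolding forests_def by auto
qed

lemma forests_contract_roots_fiber:
  assumes S: "0 \<notin> S" and BS: "B \<subseteq> S" and q: "q \<in> forests (S - B)"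
  shows "{p \<in> forests S. {j\<in>S. p j = 0} = B \<and> contract_roots B S p = q}
    = (\<lambda>c j. if j \<in> B then 0 else c j) ` (\<Pi>\<^sub>E j\<in>S - B. parent_choices B q j)"
    (is "?F = ?attach ` ?C")
proof
  show "?attach ` ?C \<subseteq> ?F"
  proof
    fix p assume "p \<in> ?attach ` ?C"
    then obtain c where "c \<in> ?C" "p = ?attach c" by blast
    then show "p \<in> ?F" using attach_to_roots_in_fiber[OF S BS q] by simp
  qed
  show "?F \<subseteq> ?attach ` ?C"
  proof
    fix p assume "p \<in> ?F"
    then have p: "p \<in> forests S" and B: "B = {j\<in>S. p j = 0}" and q_eq: "contract_roots B S p = q"
      by auto
    have "p = ?attach (restrict p (S - B))"
    proof
      fix j show "p j = ?attach (restrict p (S - B)) j"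
        using B PiE_arb[of p S _ j] p unfolding forests_def by auto
    qed
    moreover have "p j \<in> parent_choices B q j" if "j \<in> S - B" for j
    proof -
      have "q j = (if p j \<in> B then 0 else p j)"
        using q_eq that unfolding contract_roots_def by auto
      moreover have "p j \<noteq> 0" using B that by auto
      ultimately show ?thesis unfolding parent_choices_def by auto
    qed
    then have "restrict p (S - B) \<in> ?C" by (simp add: restrict_PiE_iff)
    ultimately show "p \<in> ?attach ` ?C" by blast
  qed
qed

lemma prod_forest_weight_attach_to_roots:
  assumes fin: "finite S" and BS: "B \<subseteq> S" and c: "\<And>j. j \<in> S - B \<Longrightarrow> c j \<noteq> 0"
  shows "(\<Prod>j\<in>S. forest_weight W R (\<lambda>j. if j \<in> B then 0 else c j) j)
    = (\<Prod>j\<in>B. R j) * (\<Prod>j\<in>S - B. W (c j) j)"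
proof -
  have "(\<Prod>j\<in>S. forest_weight W R (\<lambda>j. if j \<in> B then 0 else c j) j)
      = (\<Prod>j\<in>S - B. forest_weight W R (\<lambda>j. if j \<in> B then 0 else c j) j)
      * (\<Prod>j\<in>B. forest_weight W R (\<lambda>j. if j \<in> B then 0 else c j) j)"
    by (rule prod.subset_diff[OF BS fin])
  also have "\<dots> = (\<Prod>j\<in>S - B. W (c j) j) * (\<Prod>j\<in>B. R j)"
  proof (intro arg_cong2[where f="(*)"] prod.cong refl)
    fix j assume "j \<in> S - B"
    then show "forest_weight W R (\<lambda>j. if j \<in> B then 0 else c j) j = W (c j) j"
      using c[of j] by (simp add: forest_weight_def)
  qed (simp add: forest_weight_def)
  finally show ?thesis by simp
qed

lemma inj_on_attach_to_roots:
  "inj_on (\<lambda>c j. if j \<in> B then 0 else c j) (\<Pi>\<^sub>E j\<in>S - B. C j)"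
proof (rule inj_onI)
  fix c c' assume c: "c \<in> (\<Pi>\<^sub>E j\<in>S - B. C j)" "c' \<in> (\<Pi>\<^sub>E j\<in>S - B. C j)"
    and eq: "(\<lambda>j. if j \<in> B then 0 else c j) = (\<lambda>j. if j \<in> B then 0 else c' j)"
  show "c = c'"
  proof (rule PiE_ext[OF c])
    fix j assume "j \<in> S - B"
    then show "c j = c' j" using fun_cong[OF eq, of j] by simp
  qed
qed

lemma forest_sum_root_set:
  assumes fin: "finite S" and S: "0 \<notin> S" and BS: "B \<subseteq> S"
  shows "(\<Sum>p\<in>{p \<in> forests S. {j\<in>S. p j = 0} = B}. \<Prod>j\<in>S. forest_weight W R p j)
       = (\<Prod>j\<in>B. R j) * forest_sum W (inflow W B) (S - B)"
proof -
  let ?F = "{p \<in> forests S. {j\<in>S. p j = 0} = B}"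
  let ?attach = "\<lambda>c j. if j \<in> B then 0 else c j"
  let ?w = "\<lambda>p. \<Prod>j\<in>S. forest_weight W R p j"
  let ?C = "\<lambda>q. \<Pi>\<^sub>E j\<in>S - B. parent_choices B q j"
  have finB: "finite B" using finite_subset[OF BS fin] .
  have B0: "0 \<notin> B" using S BS by blast
  have "(\<Sum>p\<in>?F. ?w p) = (\<Sum>q\<in>forests (S - B). \<Sum>p\<in>{p\<in>?F. contract_roots B S p = q}. ?w p)"
    by (rule sum.group[symmetric])
      (use fin finite_forests contract_roots_in_forests[OF S] in auto)
  also have "\<dots> = (\<Sum>q\<in>forests (S - B). \<Sum>c\<in>?C q. ?w (?attach c))"
  proof (rule sum.cong[OF refl])
    fix q assume q: "q \<in> forests (S - B)"
    have "{p\<in>?F. contract_roots B S p = q} = ?attach ` ?C q"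
      using forests_contract_roots_fiber[OF S BS q] by auto
    moreover have "inj_on ?attach (?C q)"
      by (rule inj_on_attach_to_roots)
    ultimately show "(\<Sum>p\<in>{p\<in>?F. contract_roots B S p = q}. ?w p) = (\<Sum>c\<in>?C q. ?w (?attach c))"
      by (simp add: sum.reindex)
  qed
  also have "\<dots> = (\<Sum>q\<in>forests (S - B). (\<Prod>j\<in>B. R j) * (\<Sum>c\<in>?C q. \<Prod>j\<in>S - B. W (c j) j))"
  proof (rule sum.cong[OF refl])
    fix q assume q: "q \<in> forests (S - B)"
    have nonzero: "c j \<noteq> 0" if "c \<in> ?C q" "j \<in> S - B" for c j
      using parent_choices_cases(2)[OF B0 BS forestsD(1)[OF q that(2)] PiE_mem[OF that]] .
    show "(\<Sum>c\<in>?C q. ?w (?attach c)) = (\<Prod>j\<in>B. R j) * (\<Sum>c\<in>?C q. \<Prod>j\<in>S - B. W (c j) j)"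
      unfolding sum_distrib_left
      by (rule sum.cong[OF refl], rule prod_forest_weight_attach_to_roots[OF fin BS], rule nonzero)
  qed
  also have "\<dots> = (\<Prod>j\<in>B. R j) * (\<Sum>q\<in>forests (S - B). \<Prod>j\<in>S - B. \<Sum>a\<in>parent_choices B q j. W a j)"
    using fin finB by (simp add: sum_distrib_left prod_sum_PiE parent_choices_def)
  also have "\<dots> = (\<Prod>j\<in>B. R j) * forest_sum W (inflow W B) (S - B)"
    unfolding forest_sum_def forest_weight_def inflow_def parent_choices_def
    by (intro arg_cong2[where f="(*)"] sum.cong prod.cong) auto
  finally show ?thesis .
qed

lemma forest_sum_rec:
  assumes fin: "finite S" and S: "0 \<notin> S" and ne: "S \<noteq> {}"
  shows "forest_sum W R S = (\<Sum>B\<in>Pow S - {{}}. (\<Prod>j\<in>B. R j) * forest_sum W (inflow W B) (S - B))"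
proof -
  let ?roots = "\<lambda>p. {j\<in>S. p j = 0}"
  let ?w = "\<lambda>p. \<Prod>j\<in>S. forest_weight W R p j"
  have "forest_sum W R S = (\<Sum>B\<in>Pow S. \<Sum>p\<in>{p \<in> forests S. ?roots p = B}. ?w p)"
    unfolding forest_sum_def by (rule sum.group[symmetric]) (use fin finite_forests in auto)
  also have "\<dots> = (\<Sum>B\<in>Pow S - {{}}. \<Sum>p\<in>{p \<in> forests S. ?roots p = B}. ?w p)"
  proof -
    have "{p \<in> forests S. ?roots p = {}} = {}"
      using forest_has_root[OF _ S] ne by blast
    then have "(\<Sum>p\<in>{p \<in> forests S. ?roots p = {}}. ?w p) = 0"
      by (metis sum.empty)
    then show ?thesis
      using fin sum.remove[of "Pow S" "{}" "\<lambda>B. \<Sum>p\<in>{p \<in> forests S. ?roots p = B}. ?w p"]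
      by simp
  qed
  also have "\<dots> = (\<Sum>B\<in>Pow S - {{}}. (\<Prod>j\<in>B. R j) * forest_sum W (inflow W B) (S - B))"
    using forest_sum_root_set[OF fin S] by (intro sum.cong) auto
  finally show ?thesis .
qed

theorem card_good_thresholds_eq_forest_sum:
  "finite S \<Longrightarrow> 0 \<notin> S \<Longrightarrow> card (good_thresholds W R S) = forest_sum W R S"
proof (induction "card S" arbitrary: S R rule: less_induct)
  case less
  show ?case
  proof (cases "S = {}")
    case True
    have "good_thresholds W R {} = {\<lambda>_. undefined}"
      unfolding good_thresholds_def good_threshold_def by auto
    then show ?thesis using True forest_sum_empty by simp
  next
    case False
    have IH: "card (good_thresholds W (inflow W B) (S - B)) = forest_sum W (inflow W B) (S - B)"
      if "B \<in> Pow S - {{}}" for B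
      using that less by (intro less.hyps psubset_card_mono) auto
    show ?thesis
      unfolding card_good_thresholds_rec[OF less.prems(1) False]
        forest_sum_rec[OF less.prems False] by (simp add: IH)
  qed
qed

lemma elem_forests_eq_forests: "elem_forests d = forests {1..d}"
proof -
  have "insert 0 {1..d} = {0..d}" by auto
  then show ?thesis
    unfolding elem_forests_def forests_def reaches_root_funpow_iff by simp
qed

section \<open>Cyclic shifts of step functions\<close>

lemma bij_betw_PiE_componentwise:
  assumes "\<And>i. i \<in> I \<Longrightarrow> bij_betw (f i) (A i) (B i)"
  shows "bij_betw (\<lambda>x. \<lambda>i\<in>I. f i (x i)) (\<Pi>\<^sub>E i\<in>I. A i) (\<Pi>\<^sub>E i\<in>I. B i)"
proof (rule bij_betwI[where g="\<lambda>y. \<lambda>i\<in>I. inv_into (A i) (f i) (y i)"])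
  show "(\<lambda>x. \<lambda>i\<in>I. f i (x i)) \<in> (\<Pi>\<^sub>E i\<in>I. A i) \<rightarrow> (\<Pi>\<^sub>E i\<in>I. B i)"
  proof
    fix x assume x: "x \<in> (\<Pi>\<^sub>E i\<in>I. A i)"
    have "f i (x i) \<in> B i" if "i \<in> I" for i
      using bij_betw_apply[OF assms[OF that] PiE_mem[OF x that]] .
    then show "(\<lambda>i\<in>I. f i (x i)) \<in> (\<Pi>\<^sub>E i\<in>I. B i)" by (simp add: restrict_PiE_iff)
  qed
  show "(\<lambda>y. \<lambda>i\<in>I. inv_into (A i) (f i) (y i)) \<in> (\<Pi>\<^sub>E i\<in>I. B i) \<rightarrow> (\<Pi>\<^sub>E i\<in>I. A i)"
  proof
    fix y assume y: "y \<in> (\<Pi>\<^sub>E i\<in>I. B i)"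
    have "inv_into (A i) (f i) (y i) \<in> A i" if "i \<in> I" for i
      using bij_betw_apply[OF bij_betw_inv_into[OF assms[OF that]] PiE_mem[OF y that]] .
    then show "(\<lambda>i\<in>I. inv_into (A i) (f i) (y i)) \<in> (\<Pi>\<^sub>E i\<in>I. A i)"
      by (simp add: restrict_PiE_iff)
  qed
  show "(\<lambda>i\<in>I. inv_into (A i) (f i) ((\<lambda>i\<in>I. f i (x i)) i)) = x"
    if x: "x \<in> (\<Pi>\<^sub>E i\<in>I. A i)" for x
  proof
    fix i show "(\<lambda>i\<in>I. inv_into (A i) (f i) ((\<lambda>i\<in>I. f i (x i)) i)) i = x i"
      using PiE_arb[OF x, of i] bij_betw_inv_into_left[OF assms PiE_mem[OF x]] by (cases "i \<in> I") auto
  qed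
  show "(\<lambda>i\<in>I. f i ((\<lambda>i\<in>I. inv_into (A i) (f i) (y i)) i)) = y"
    if y: "y \<in> (\<Pi>\<^sub>E i\<in>I. B i)" for y
  proof
    fix i show "(\<lambda>i\<in>I. f i ((\<lambda>i\<in>I. inv_into (A i) (f i) (y i)) i)) i = y i"
      using PiE_arb[OF y, of i] bij_betw_inv_into_right[OF assms PiE_mem[OF y]] by (cases "i \<in> I") auto
  qed
qed

text \<open>
  A rotation by \<open>q\<close> of a step function on \<open>{0..n}\<close> whose step lies between \<open>p\<close> and
  \<open>p + 1\<close> has its step between \<open>jump_time n p q - 1\<close> and \<open>jump_time n p q\<close>.
\<close>

definition jump_time :: "nat \<Rightarrow> nat \<Rightarrow> nat \<Rightarrow> nat" where
  "jump_time n p q = (if q \<le> p then p + 1 - q else n + p + 1 - q)"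

lemma bij_betw_jump_time: "p < n \<Longrightarrow> bij_betw (jump_time n p) {..<n} {1..n}"
  by (rule bij_betwI[where g="\<lambda>t. if t \<le> p + 1 then p + 1 - t else n + p + 1 - t"])
    (auto simp: jump_time_def)

lemma cyc_step_function:
  fixes g :: "nat \<Rightarrow> int"
  assumes p: "p < n" and g0: "\<And>m. m \<le> p \<Longrightarrow> g m = 0"
    and gw: "\<And>m. p < m \<Longrightarrow> m \<le> n \<Longrightarrow> g m = w" and q: "q < n" and h: "h \<le> n"
  shows "cyc g q n h = (if jump_time n p q \<le> h then w else 0)"
proof -
  have gn: "g n = w" using gw p by simp
  show ?thesis
  proof (cases "q \<le> p")
    case True
    then show ?thesis
      using gn g0[of q] g0[of "q + h"] gw[of "q + h"] g0[of "h - (n - q)"] q h p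
      unfolding cyc_def jump_time_def by auto
  next
    case False
    then show ?thesis
      using gn gw[of q] gw[of "q + h"] g0[of "h - (n - q)"] gw[of "h - (n - q)"] q h p
      unfolding cyc_def jump_time_def by auto
  qed
qed

lemma cyc_linear:
  fixes g :: "nat \<Rightarrow> int"
  assumes g: "\<And>m. m \<le> n \<Longrightarrow> g m = - int m" and q: "q < n" and h: "h \<le> n"
  shows "cyc g q n h = - int h"
  using g[of "q + h"] g[of q] g[of n] g[of "h - (n - q)"] q h unfolding cyc_def by auto

section \<open>Simple systems\<close>

text \<open>
  Here \<open>jump i\<close> is the time \<open>k'\<^sub>i\<close> of the definition of a simple system.
\<close>

locale simple_jump_system =
  fixes d :: nat and r :: "nat \<Rightarrow> int" and x :: "nat \<Rightarrow> nat \<Rightarrow> nat \<Rightarrow> int"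
    and k jump :: "nat \<Rightarrow> nat"
  assumes r_nonneg: "\<And>j. j \<in> {1..d} \<Longrightarrow> 0 \<le> r j"
    and jump_less: "\<And>i. i \<in> {1..d} \<Longrightarrow> jump i < k i"
    and diagonal: "\<And>i m. i \<in> {1..d} \<Longrightarrow> m \<le> k i \<Longrightarrow> x i i m = - int m"
    and before_jump: "\<And>i j m. i \<in> {1..d} \<Longrightarrow> j \<in> {1..d} \<Longrightarrow> i \<noteq> j \<Longrightarrow> m \<le> jump i \<Longrightarrow>
      x i j m = 0"
    and after_jump: "\<And>i j m. i \<in> {1..d} \<Longrightarrow> j \<in> {1..d} \<Longrightarrow> i \<noteq> j \<Longrightarrow> jump i < m \<Longrightarrow> m \<le> k i \<Longrightarrow>
      x i j m = x i j (k i)"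
    and off_diagonal_nonneg: "\<And>i j. i \<in> {1..d} \<Longrightarrow> j \<in> {1..d} \<Longrightarrow> i \<noteq> j \<Longrightarrow> 0 \<le> x i j (k i)"
    and k_solution: "is_solution d r x k k"
begin

definition edge_weight :: "nat \<Rightarrow> nat \<Rightarrow> nat" where
  "edge_weight i j = nat (x i j (k i))"

definition root_weight :: "nat \<Rightarrow> nat" where
  "root_weight j = nat (r j)"

definition jump_times :: "(nat \<Rightarrow> nat) \<Rightarrow> nat \<Rightarrow> nat" where
  "jump_times q = (\<lambda>i\<in>{1..d}. jump_time (k i) (jump i) (q i))"

lemma int_edge_weight:
  "i \<in> {1..d} \<Longrightarrow> j \<in> {1..d} \<Longrightarrow> i \<noteq> j \<Longrightarrow> int (edge_weight i j) = x i j (k i)"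
  using off_diagonal_nonneg unfolding edge_weight_def by simp

lemma int_root_weight: "j \<in> {1..d} \<Longrightarrow> int (root_weight j) = r j"
  using r_nonneg unfolding root_weight_def by simp

lemma k_eq_level:
  assumes j: "j \<in> {1..d}"
  shows "k j = level edge_weight root_weight {1..d} j"
proof -
  have "r j + (\<Sum>i\<in>{1..d}. x i j (k i)) = 0"
    using k_solution j unfolding is_solution_def by blast
  moreover have "(\<Sum>i\<in>{1..d}. x i j (k i)) = x j j (k j) + (\<Sum>i\<in>{1..d} - {j}. x i j (k i))"
    using j by (simp add: sum.remove)
  moreover have "(\<Sum>i\<in>{1..d} - {j}. x i j (k i)) = (\<Sum>i\<in>{1..d} - {j}. int (edge_weight i j))"
    using int_edge_weight j by (intro sum.cong) auto
  ultimately have "int (k j) = int (root_weight j) + int (\<Sum>i\<in>{1..d} - {j}. edge_weight i j)"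
    using diagonal[OF j] int_root_weight[OF j] by (simp add: of_nat_sum)
  then show ?thesis unfolding level_def by linarith
qed

lemma cyc_fam_eq:
  assumes q: "q i < k i" and i: "i \<in> {1..d}" and j: "j \<in> {1..d}" and h: "h \<le> k i"
  shows "cyc_fam x q k i j h
    = (if i = j then - int h else if jump_times q i \<le> h then int (edge_weight i j) else 0)"
proof (cases "i = j")
  case True
  then show ?thesis
    unfolding cyc_fam_def using cyc_linear[of "k i" "x i i" "q i" h] diagonal i q h by auto
next
  case False
  have "cyc (x i j) (q i) (k i) h = (if jump_time (k i) (jump i) (q i) \<le> h then x i j (k i) else 0)"
  proof (rule cyc_step_function[OF jump_less[OF i] _ _ q h])
    show "x i j m = 0" if "m \<le> jump i" for m
      by (rule before_jump[OF i j False that])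
    show "x i j m = x i j (k i)" if "jump i < m" "m \<le> k i" for m
      by (rule after_jump[OF i j False that])
  qed
  then show ?thesis
    unfolding cyc_fam_def jump_times_def using False i int_edge_weight[OF i j False] by simp
qed

lemma is_solution_cyc_fam_iff:
  assumes q: "q \<in> (\<Pi>\<^sub>E i\<in>{1..d}. {..<k i})"
  shows "is_solution d r (cyc_fam x q k) k s \<longleftrightarrow>
    (\<forall>i\<in>{1..d}. s i \<le> k i) \<and>
    (\<forall>j\<in>{1..d}. s j = level edge_weight root_weight {i\<in>{1..d}. jump_times q i \<le> s i} j)"
proof -
  let ?A = "{i\<in>{1..d}. jump_times q i \<le> s i}"
  have qk: "q i < k i" if "i \<in> {1..d}" for i
    using q that by auto
  have "r j + (\<Sum>i\<in>{1..d}. cyc_fam x q k i j (s i)) = 0 \<longleftrightarrow>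
      s j = level edge_weight root_weight ?A j"
    if s: "\<forall>i\<in>{1..d}. s i \<le> k i" and j: "j \<in> {1..d}" for j
  proof -
    have cyc: "cyc_fam x q k i j (s i) = (if i = j then - int (s i)
        else if i \<in> ?A then int (edge_weight i j) else 0)" if i: "i \<in> {1..d}" for i
      using cyc_fam_eq[of q i j "s i", OF qk[OF i] i j] s i by simp
    have "(\<Sum>i\<in>{1..d}. cyc_fam x q k i j (s i))
        = cyc_fam x q k j j (s j) + (\<Sum>i\<in>{1..d} - {j}. cyc_fam x q k i j (s i))"
      using j by (simp add: sum.remove)
    also have "\<dots> = - int (s j) + (\<Sum>i\<in>{1..d} - {j}. if i \<in> ?A then int (edge_weight i j) else 0)"
      using cyc j by (intro arg_cong2[where f="(+)"] sum.cong) auto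
    also have "\<dots> = - int (s j) + int (\<Sum>i\<in>?A - {j}. edge_weight i j)"
    proof -
      have "(\<Sum>i\<in>{1..d} - {j}. if i \<in> ?A then int (edge_weight i j) else 0)
          = (\<Sum>i\<in>{i \<in> {1..d} - {j}. i \<in> ?A}. int (edge_weight i j))"
        by (rule sum.inter_filter[symmetric]) simp
      also have "{i \<in> {1..d} - {j}. i \<in> ?A} = ?A - {j}" by blast
      finally show ?thesis by (simp only: of_nat_sum)
    qed
    finally show ?thesis
      using int_root_weight[OF j] unfolding level_def by linarith
  qed
  then show ?thesis
    unfolding is_solution_def by auto
qed

lemma jump_times_range:
  assumes "q \<in> (\<Pi>\<^sub>E i\<in>{1..d}. {..<k i})" and i: "i \<in> {1..d}"
  shows "jump_times q i \<in> {1..k i}"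
proof -
  have "q i \<in> {..<k i}" using assms by auto
  then show ?thesis
    using bij_betw_apply[OF bij_betw_jump_time[OF jump_less[OF i]]] i unfolding jump_times_def by simp
qed

lemma good_threshold_if_smallest_solution:
  assumes q: "q \<in> (\<Pi>\<^sub>E i\<in>{1..d}. {..<k i})"
    and smallest: "smallest_solution d r (cyc_fam x q k) k k"
  shows "good_threshold edge_weight root_weight {1..d} (jump_times q)"
  unfolding good_threshold_def
proof (intro allI impI notI)
  fix A assume A: "A \<subset> {1..d}" "consistent_set edge_weight root_weight {1..d} (jump_times q) A"
  define s where "s j = level edge_weight root_weight A j" for j
  have A_eq: "{i\<in>{1..d}. jump_times q i \<le> s i} = A"
    using A unfolding consistent_set_def s_def by auto
  moreover have "\<forall>i\<in>{1..d}. s i \<le> k i"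
    using level_mono[of "{1..d}" A] A(1) k_eq_level unfolding s_def by auto
  ultimately have "is_solution d r (cyc_fam x q k) k s"
    using is_solution_cyc_fam_iff[OF q] unfolding s_def by auto
  then have k_le_s: "\<forall>i\<in>{1..d}. k i \<le> s i"
    using smallest unfolding smallest_solution_def by auto
  obtain j where j: "j \<in> {1..d}" "j \<notin> A" using A(1) by blast
  then have "jump_times q j \<le> s j"
    using jump_times_range[OF q j(1)] k_le_s by fastforce
  then show False
    using j A_eq by auto
qed

lemma smallest_solution_if_good_threshold:
  assumes q: "q \<in> (\<Pi>\<^sub>E i\<in>{1..d}. {..<k i})"
    and good: "good_threshold edge_weight root_weight {1..d} (jump_times q)"
  shows "smallest_solution d r (cyc_fam x q k) k k"
proof -
  have "{i\<in>{1..d}. jump_times q i \<le> k i} = {1..d}"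
    using jump_times_range[OF q] by auto
  then have "is_solution d r (cyc_fam x q k) k k"
    using is_solution_cyc_fam_iff[OF q] k_eq_level by auto
  moreover have "\<forall>i\<in>{1..d}. k i \<le> s i" if s: "is_solution d r (cyc_fam x q k) k s" for s
  proof -
    let ?A = "{i\<in>{1..d}. jump_times q i \<le> s i}"
    have s_level: "\<forall>j\<in>{1..d}. s j = level edge_weight root_weight ?A j"
      using is_solution_cyc_fam_iff[OF q] s by auto
    then have "consistent_set edge_weight root_weight {1..d} (jump_times q) ?A"
      unfolding consistent_set_def by auto
    then have "\<not> ?A \<subset> {1..d}"
      using good unfolding good_threshold_def by blast
    then have "?A = {1..d}" by blast
    then show ?thesis
      using s_level k_eq_level by auto
  qed
  ultimately show ?thesis
    unfolding smallest_solution_def by auto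
qed

lemma smallest_solution_cyc_fam_iff_good_threshold:
  "q \<in> (\<Pi>\<^sub>E i\<in>{1..d}. {..<k i}) \<Longrightarrow> smallest_solution d r (cyc_fam x q k) k k
    \<longleftrightarrow> good_threshold edge_weight root_weight {1..d} (jump_times q)"
  using good_threshold_if_smallest_solution smallest_solution_if_good_threshold by blast

lemma bij_betw_jump_times:
  "bij_betw jump_times (\<Pi>\<^sub>E i\<in>{1..d}. {..<k i}) (\<Pi>\<^sub>E i\<in>{1..d}. {1..k i})"
  unfolding jump_times_def
  by (rule bij_betw_PiE_componentwise) (rule bij_betw_jump_time[OF jump_less])

theorem card_good_cyclic_permutations:
  "card {q \<in> (\<Pi>\<^sub>E i\<in>{1..d}. {..<k i}). smallest_solution d r (cyc_fam x q k) k k}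
    = forest_sum edge_weight root_weight {1..d}"
proof -
  let ?Q = "\<Pi>\<^sub>E i\<in>{1..d}. {..<k i}" and ?T = "\<Pi>\<^sub>E i\<in>{1..d}. {1..k i}"
  let ?good = "good_threshold edge_weight root_weight {1..d}"
  have "{q \<in> ?Q. smallest_solution d r (cyc_fam x q k) k k} = {q \<in> ?Q. ?good (jump_times q)}"
    by (intro Collect_cong conj_cong refl smallest_solution_cyc_fam_iff_good_threshold)
  then have "card {q \<in> ?Q. smallest_solution d r (cyc_fam x q k) k k}
      = card (jump_times ` {q \<in> ?Q. ?good (jump_times q)})"
    using bij_betw_jump_times unfolding bij_betw_def
    by (simp add: card_image inj_on_subset[of _ ?Q])
  also have "jump_times ` {q \<in> ?Q. ?good (jump_times q)} = {t \<in> jump_times ` ?Q. ?good t}"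
    by blast
  also have "jump_times ` ?Q = ?T"
    using bij_betw_jump_times unfolding bij_betw_def by blast
  also have "?T = (\<Pi>\<^sub>E j\<in>{1..d}. {1..level edge_weight root_weight {1..d} j})"
    by (rule PiE_cong) (simp add: k_eq_level)
  finally show ?thesis
    using card_good_thresholds_eq_forest_sum[of "{1..d}" edge_weight root_weight]
    unfolding good_thresholds_def by simp
qed

lemma int_forest_sum:
  "int (forest_sum edge_weight root_weight {1..d})
    = (\<Sum>p\<in>elem_forests d. \<Prod>i\<in>{1..d}. (if p i = 0 then r i else x (p i) i (k (p i))))"
  unfolding forest_sum_def elem_forests_eq_forests of_nat_sum of_nat_prod
proof (intro sum.cong prod.cong refl)
  fix p i assume p: "p \<in> forests {1..d}" and i: "i \<in> {1..d}"
  then have "p i \<in> insert 0 {1..d}" "p i \<noteq> i"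
    using forestsD(1,2) by blast+
  then show "int (forest_weight edge_weight root_weight p i)
      = (if p i = 0 then r i else x (p i) i (k (p i)))"
    unfolding forest_weight_def using int_root_weight[OF i] int_edge_weight[of "p i" i] i by auto
qed

end

lemma simple_system_jumps:
  assumes simple: "simple_system d x k" and k_pos: "\<forall>i\<in>{1..d}. 1 \<le> k i"
  obtains jump where "\<And>i. i \<in> {1..d} \<Longrightarrow> jump i < k i"
    and "\<And>i j m. i \<in> {1..d} \<Longrightarrow> j \<in> {1..d} \<Longrightarrow> i \<noteq> j \<Longrightarrow> m \<le> jump i \<Longrightarrow> x i j m = 0"
    and "\<And>i j m. i \<in> {1..d} \<Longrightarrow> j \<in> {1..d} \<Longrightarrow> i \<noteq> j \<Longrightarrow> jump i < m \<Longrightarrow> m \<le> k i \<Longrightarrow>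
      x i j m = x i j (k i)"
proof -
  obtain jump where jump: "\<forall>i\<in>{1..d}. jump i \<le> k i - 1 \<and>
      (\<forall>m \<le> jump i. \<forall>j\<in>{1..d}. j \<noteq> i \<longrightarrow> x i j m = 0) \<and>
      (\<forall>m. jump i + 1 \<le> m \<and> m \<le> k i \<longrightarrow> (\<forall>j\<in>{1..d}. j \<noteq> i \<longrightarrow> x i j m = x i j (k i)))"
    using bchoice[OF simple[unfolded simple_system_def]] by blast
  show ?thesis
  proof (rule that)
    show "jump i < k i" if "i \<in> {1..d}" for i
      using conjunct1[OF bspec[OF jump that]] bspec[OF k_pos that] by linarith
    show "x i j m = 0" if "i \<in> {1..d}" "j \<in> {1..d}" "i \<noteq> j" "m \<le> jump i" for i j m
      using conjunct1[OF conjunct2[OF bspec[OF jump that(1)]]] that(2-4) by simp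
    show "x i j m = x i j (k i)"
      if "i \<in> {1..d}" "j \<in> {1..d}" "i \<noteq> j" "jump i < m" "m \<le> k i" for i j m
    proof (rule conjunct2[OF conjunct2[OF bspec[OF jump that(1)]], rule_format])
      show "jump i + 1 \<le> m \<and> m \<le> k i" using that(4,5) by simp
    qed (use that(2,3) in auto)
  qed
qed

lemma simple_jump_system_if_simple_system:
  assumes r: "\<forall>i\<in>{1..d}. r i \<ge> 0" and x: "in_S_bar d r x k" and simple: "simple_system d x k"
  obtains jump where "simple_jump_system d r x k jump"
proof -
  have k_pos: "\<forall>i\<in>{1..d}. 1 \<le> k i" and mono: "in_S d x k"
    and diagonal: "\<forall>i\<in>{1..d}. \<forall>m \<le> k i. x i i m = - int m"
    and smallest: "smallest_solution d r x k k"
    using x unfolding in_S_bar_def by blast+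
  obtain jump where jump_less: "\<And>i. i \<in> {1..d} \<Longrightarrow> jump i < k i"
    and before: "\<And>i j m. i \<in> {1..d} \<Longrightarrow> j \<in> {1..d} \<Longrightarrow> i \<noteq> j \<Longrightarrow> m \<le> jump i \<Longrightarrow> x i j m = 0"
    and after: "\<And>i j m. i \<in> {1..d} \<Longrightarrow> j \<in> {1..d} \<Longrightarrow> i \<noteq> j \<Longrightarrow> jump i < m \<Longrightarrow> m \<le> k i \<Longrightarrow>
      x i j m = x i j (k i)"
    using simple_system_jumps[OF simple k_pos] by blast
  have "simple_jump_system d r x k jump"
  proof
    show "0 \<le> r j" if "j \<in> {1..d}" for j
      using r that by blast
    show "x i i m = - int m" if "i \<in> {1..d}" "m \<le> k i" for i m
      using diagonal that by blast
    show "is_solution d r x k k"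
      using smallest unfolding smallest_solution_def by blast
    show "0 \<le> x i j (k i)" if "i \<in> {1..d}" "j \<in> {1..d}" "i \<noteq> j" for i j
    proof -
      have "x i j (jump i) \<le> x i j (Suc (jump i))"
        using mono jump_less[OF that(1)] that unfolding in_S_def by blast
      then show ?thesis
        using before[OF that order_refl] after[OF that, of "Suc (jump i)"] jump_less[OF that(1)]
        by simp
    qed
  qed (fact jump_less before after)+
  then show ?thesis by (rule that)
qed

theorem lemma4p4:
  fixes d :: nat and r :: "nat \<Rightarrow> int" and x :: "nat \<Rightarrow> nat \<Rightarrow> nat \<Rightarrow> int"
    and k :: "nat \<Rightarrow> nat"
  assumes "d \<ge> 2"
    and "\<forall>i\<in>{1..d}. r i \<ge> 0" and "\<exists>i\<in>{1..d}. r i \<noteq> 0"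
    and "in_S_bar d r x k"
    and "simple_system d x k"
  shows "int (card {q \<in> (\<Pi>\<^sub>E i\<in>{1..d}. {..<k i}). smallest_solution d r (cyc_fam x q k) k k})
         = (\<Sum>jv\<in>elem_forests d. \<Prod>i\<in>{1..d}. (if jv i = 0 then r i else x (jv i) i (k (jv i))))"
proof -
  obtain jump where "simple_jump_system d r x k jump"
    using simple_jump_system_if_simple_system[OF assms(2,4,5)] by blast
  then interpret simple_jump_system d r x k jump .
  show ?thesis
    using card_good_cyclic_permutations int_forest_sum by simp
qed

end
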